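(* Let $F$ be a strictly increasing toxicity-rate function with values in $[0,1]$, let $d_1<\dots<d_m$ be fixed dose levels, and let $p\in(0,1/2)$ be the target rate. Suppose that for some index $u^*\ge 2$ we have $F(d_{u^*})=p$ (so $d_{u^*}$ is the MTD) and $F(d_{u^*-1})<p$. Consider the point design defined in the context, using cohorts of size $k\ge1$, started at a dose below $d_{u^*}$, with toxicity responses independent $\mathrm{Bernoulli}(F(x))$ at the assigned dose $x$. Then with positive probability the dose allocations do not converge to $d_{u^*}$.
   Context: Point design: cohorts of $k$ subjects are treated successively, the first at a chosen starting dose. For each level $d_u$ with observations, $\hat F(d_u)$ is the observed toxicity frequency at $d_u$ (possibly monotonized across levels by isotonic regression). After each cohort, the next cohort is allocated to the level whose $\hat F(d_u)$ is closest to $p$; except that if the highest dose $d_u$ for which an estimate is available has $\hat F(d_u)<p$, the design escalates to $d_{u+1}$ (boundary permitting), and if the lowest dose $d_u$ with an estimate has $\hat F(d_u)>p$, it de-escalates to $d_{u-1}$ (boundary permitting). Convergence to $d_{u^*}$ means that from some cohort on, all cohorts are allocated to $d_{u^*}$. *)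

theory Defs
  imports "HOL-Probability.Probability"
begin

text \<open>Dose levels are indexed 1..m.  A design state after some cohorts consists of
  N u = number of subjects treated at level u, T u = number of toxicities at level u,
  and the level to which the next cohort is allocated.\<close>

type_synonym design_state = "(nat \<Rightarrow> nat) \<times> (nat \<Rightarrow> nat) \<times> nat"

definition observed :: "nat \<Rightarrow> (nat \<Rightarrow> nat) \<Rightarrow> nat set" where
  "observed m N = {u \<in> {1..m}. 0 < N u}"

text \<open>Observed toxicity frequency at level u (raw, not monotonized).\<close>
definition est :: "(nat \<Rightarrow> nat) \<Rightarrow> (nat \<Rightarrow> nat) \<Rightarrow> nat \<Rightarrow> real" where
  "est N T u = real (T u) / real (N u)"

definition closest :: "nat \<Rightarrow> real \<Rightarrow> (nat \<Rightarrow> nat) \<Rightarrow> (nat \<Rightarrow> nat) \<Rightarrow> nat set" where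
  "closest m p N T = {u \<in> observed m N.
      \<forall>v \<in> observed m N. \<bar>est N T u - p\<bar> \<le> \<bar>est N T v - p\<bar>}"

text \<open>Allocation rule of the point design; ties among closest levels are broken by an
  arbitrary tie-breaking function tb.\<close>
definition next_level ::
  "nat \<Rightarrow> real \<Rightarrow> ((nat \<Rightarrow> nat) \<Rightarrow> (nat \<Rightarrow> nat) \<Rightarrow> nat set \<Rightarrow> nat)
   \<Rightarrow> (nat \<Rightarrow> nat) \<Rightarrow> (nat \<Rightarrow> nat) \<Rightarrow> nat" where
  "next_level m p tb N T =
     (let hi = Max (observed m N); lo = Min (observed m N) in
      if est N T hi < p \<and> hi < m then hi + 1
      else if est N T lo > p \<and> 1 < lo then lo - 1
      else tb N T (closest m p N T))"

text \<open>Outcome randomness: omega (u, j) is the toxicity indicator of the j-th subject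
  ever treated at level u; these are independent Bernoulli(F(d u)).\<close>
definition tox_space :: "(real \<Rightarrow> real) \<Rightarrow> (nat \<Rightarrow> real) \<Rightarrow> (nat \<times> nat \<Rightarrow> bool) measure" where
  "tox_space F d = PiM UNIV (\<lambda>uj. measure_pmf (bernoulli_pmf (F (d (fst uj)))))"

definition cohort_step ::
  "nat \<Rightarrow> real \<Rightarrow> nat \<Rightarrow> ((nat \<Rightarrow> nat) \<Rightarrow> (nat \<Rightarrow> nat) \<Rightarrow> nat set \<Rightarrow> nat)
   \<Rightarrow> (nat \<times> nat \<Rightarrow> bool) \<Rightarrow> design_state \<Rightarrow> design_state" where
  "cohort_step m p k tb \<omega> st =
     (case st of (N, T, x) \<Rightarrow>
       (let N' = N(x := N x + k);
            T' = T(x := T x + card {i. i < k \<and> \<omega> (x, N x + i)})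
        in (N', T', next_level m p tb N' T')))"

primrec design ::
  "nat \<Rightarrow> real \<Rightarrow> nat \<Rightarrow> ((nat \<Rightarrow> nat) \<Rightarrow> (nat \<Rightarrow> nat) \<Rightarrow> nat set \<Rightarrow> nat) \<Rightarrow> nat
   \<Rightarrow> (nat \<times> nat \<Rightarrow> bool) \<Rightarrow> nat \<Rightarrow> design_state" where
  "design m p k tb s \<omega> 0 = ((\<lambda>_. 0), (\<lambda>_. 0), s)"
| "design m p k tb s \<omega> (Suc n) = cohort_step m p k tb \<omega> (design m p k tb s \<omega> n)"

text \<open>Level allocated to cohort n (cohort 0 gets the starting level s).\<close>
definition alloc ::
  "nat \<Rightarrow> real \<Rightarrow> nat \<Rightarrow> ((nat \<Rightarrow> nat) \<Rightarrow> (nat \<Rightarrow> nat) \<Rightarrow> nat set \<Rightarrow> nat) \<Rightarrow> nat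
   \<Rightarrow> (nat \<times> nat \<Rightarrow> bool) \<Rightarrow> nat \<Rightarrow> nat" where
  "alloc m p k tb s \<omega> n = snd (snd (design m p k tb s \<omega> n))"

definition converges_to :: "(nat \<Rightarrow> nat) \<Rightarrow> nat \<Rightarrow> bool" where
  "converges_to a u \<longleftrightarrow> (\<exists>n0. \<forall>n\<ge>n0. a n = u)"

end

theory Submission
  imports Defs
begin

text \<open>Escalating from the starting level, a run in which no toxicity occurs below the MTD
  and the whole first cohort at the MTD is toxic has positive probability.  After that run the
  MTD has estimate 1 while the starting level keeps an estimate below 1, which for
  \<open>p < 1/2\<close> is strictly closer to \<open>p\<close>; the MTD is neither an escalation nor a
  de-escalation target, so it is never allocated again, and its estimate stays 1 forever.\<close>

lemma finite_observed: "finite (observed m N)"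
  unfolding observed_def by auto

lemma closest_subset_observed: "closest m p N T \<subseteq> observed m N"
  unfolding closest_def by auto

lemma closest_nonempty:
  assumes "observed m N \<noteq> {}"
  shows "closest m p N T \<noteq> {}"
proof -
  define f where "f u = \<bar>est N T u - p\<bar>" for u
  have fin: "finite (f ` observed m N)"
    using finite_observed by auto
  have "Min (f ` observed m N) \<in> f ` observed m N"
    using fin assms by (intro Min_in) auto
  then obtain u where u: "u \<in> observed m N" "f u = Min (f ` observed m N)"
    by auto
  then have "\<forall>v \<in> observed m N. f u \<le> f v"
    using fin by auto
  with u have "u \<in> closest m p N T"
    unfolding closest_def f_def by auto
  then show ?thesis
    by auto
qed

definition locked_out :: "nat \<Rightarrow> nat \<Rightarrow> nat \<Rightarrow> design_state \<Rightarrow> bool" where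
  "locked_out m u w st \<longleftrightarrow> (case st of (N, T, x) \<Rightarrow>
     u \<in> observed m N \<and> T u = N u \<and> w \<in> observed m N \<and> T w < N w \<and> x \<noteq> u)"

locale tie_breaking =
  fixes tb :: "(nat \<Rightarrow> nat) \<Rightarrow> (nat \<Rightarrow> nat) \<Rightarrow> nat set \<Rightarrow> nat"
  assumes tie_break_mem: "finite A \<Longrightarrow> A \<noteq> {} \<Longrightarrow> tb N T A \<in> A"
begin

lemma tie_break_in_closest:
  assumes "observed m N \<noteq> {}"
  shows "tb N T (closest m p N T) \<in> closest m p N T"
  by (rule tie_break_mem[OF finite_subset[OF closest_subset_observed finite_observed]
        closest_nonempty[OF assms]])

lemma next_level_in_range:
  assumes "observed m N \<noteq> {}"
  shows "next_level m p tb N T \<in> {1..m}"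
proof -
  have obs: "observed m N \<subseteq> {1..m}"
    unfolding observed_def by auto
  have "Max (observed m N) \<in> {1..m}" "Min (observed m N) \<in> {1..m}"
    using Max_in[OF finite_observed assms] Min_in[OF finite_observed assms] obs by auto
  moreover have "tb N T (closest m p N T) \<in> {1..m}"
    using tie_break_in_closest[OF assms] closest_subset_observed[of m p N T] obs by blast
  ultimately show ?thesis
    unfolding next_level_def Let_def by auto
qed

text \<open>Being observed, a level with estimate 1 lies between the lowest and the highest observed
  level, so only the closest-to-\<open>p\<close> rule could select it; for \<open>p < 1/2\<close> any
  estimate in \<open>[0, 1)\<close> is strictly closer to \<open>p\<close> than 1 is.\<close>

lemma next_level_avoids_saturated:
  assumes u: "u \<in> observed m N" "T u = N u"
    and w: "w \<in> observed m N" "T w < N w"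
    and p: "0 < p" "p < 1/2"
  shows "next_level m p tb N T \<noteq> u"
proof -
  have between: "u \<le> Max (observed m N)" "Min (observed m N) \<le> u"
    using u(1) finite_observed by auto
  have "est N T u = 1"
    using u unfolding observed_def est_def by simp
  moreover have "0 \<le> est N T w" "est N T w < 1"
    using w unfolding observed_def est_def by (auto simp: divide_less_eq)
  ultimately have "\<bar>est N T w - p\<bar> < \<bar>est N T u - p\<bar>"
    using p by auto
  then have "u \<notin> closest m p N T"
    using w(1) unfolding closest_def by force
  then have "tb N T (closest m p N T) \<noteq> u"
    using tie_break_in_closest u(1) by blast
  with between show ?thesis
    unfolding next_level_def Let_def by auto
qed

lemma design_in_range:
  assumes s: "s \<in> {1..m}" and k: "1 \<le> k"
    and st: "design m p k tb s \<omega> n = (N, T, x)"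
  shows "\<forall>u. N u \<le> n * k" and "x \<in> {1..m}"
proof -
  have "(\<forall>u. fst (design m p k tb s \<omega> n) u \<le> n * k) \<and> snd (snd (design m p k tb s \<omega> n)) \<in> {1..m}"
  proof (induction n)
    case 0
    then show ?case using s by simp
  next
    case (Suc n)
    obtain N T x where st: "design m p k tb s \<omega> n = (N, T, x)"
      by (cases "design m p k tb s \<omega> n") auto
    with Suc have "\<forall>u. N u \<le> n * k" "x \<in> {1..m}" by auto
    then have "\<forall>u. (N(x := N x + k)) u \<le> Suc n * k" "observed m (N(x := N x + k)) \<noteq> {}"
      using k unfolding observed_def by (auto simp: trans_le_add2)
    with next_level_in_range st show ?case
      by (simp add: cohort_step_def Let_def)
  qed
  with st show "\<forall>u. N u \<le> n * k" "x \<in> {1..m}" by auto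
qed

lemma design_depends_on_initial_outcomes:
  assumes s: "s \<in> {1..m}" and k: "1 \<le> k"
    and agree: "\<And>u j. u \<le> m \<Longrightarrow> j < n * k \<Longrightarrow> \<omega> (u, j) = \<omega>' (u, j)"
  shows "design m p k tb s \<omega> n = design m p k tb s \<omega>' n"
  using agree
proof (induction n)
  case 0
  then show ?case by simp
next
  case (Suc n)
  have IH: "design m p k tb s \<omega> n = design m p k tb s \<omega>' n"
    using Suc by (intro Suc.IH) auto
  obtain N T x where st: "design m p k tb s \<omega> n = (N, T, x)"
    by (cases "design m p k tb s \<omega> n") auto
  have N: "N x \<le> n * k" and x: "x \<in> {1..m}"
    using design_in_range[OF s k st] by auto
  have "\<omega> (x, N x + i) = \<omega>' (x, N x + i)" if "i < k" for i
    using Suc.prems[of x "N x + i"] N x that by auto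
  then have "{i. i < k \<and> \<omega> (x, N x + i)} = {i. i < k \<and> \<omega>' (x, N x + i)}"
    by auto
  with st IH show ?case
    by (simp add: cohort_step_def Let_def)
qed

lemma locked_out_cohort_step:
  assumes p: "0 < p" "p < 1/2"
    and lock: "locked_out m u w st"
  shows "locked_out m u w (cohort_step m p k tb \<omega> st)"
proof -
  obtain N T x where st: "st = (N, T, x)"
    by (cases st) auto
  define N' where "N' = N(x := N x + k)"
  define T' where "T' = T(x := T x + card {i. i < k \<and> \<omega> (x, N x + i)})"
  have "card {i. i < k \<and> \<omega> (x, N x + i)} \<le> k"
    using card_mono[of "{..<k}" "{i. i < k \<and> \<omega> (x, N x + i)}"] by auto
  then have "u \<in> observed m N'" "T' u = N' u" "w \<in> observed m N'" "T' w < N' w"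
    using lock unfolding st locked_out_def observed_def N'_def T'_def by auto
  moreover have "next_level m p tb N' T' \<noteq> u"
    using next_level_avoids_saturated[OF calculation p] .
  ultimately show ?thesis
    unfolding st locked_out_def cohort_step_def Let_def N'_def T'_def by simp
qed

lemma locked_out_forever:
  assumes p: "0 < p" "p < 1/2"
    and lock: "locked_out m u w (design m p k tb s \<omega> n0)"
    and "n0 \<le> n"
  shows "alloc m p k tb s \<omega> n \<noteq> u"
proof -
  have "locked_out m u w (design m p k tb s \<omega> n)"
    using \<open>n0 \<le> n\<close>
  proof (induction n rule: dec_induct)
    case base
    then show ?case using lock .
  next
    case (step n)
    then show ?case using locked_out_cohort_step[OF p] by simp
  qed
  then show ?thesis
    unfolding locked_out_def alloc_def by (auto split: prod.splits)
qed

lemma design_escalates_without_toxicity: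
  assumes s: "1 \<le> s" and p: "0 < p" and k: "1 \<le> k"
    and no_tox: "\<And>u i. s \<le> u \<Longrightarrow> u < s + j \<Longrightarrow> i < k \<Longrightarrow> \<not> \<omega> (u, i)"
    and "s + j \<le> m"
  shows "design m p k tb s \<omega> j = ((\<lambda>u. if s \<le> u \<and> u < s + j then k else 0), (\<lambda>_. 0), s + j)"
  using no_tox \<open>s + j \<le> m\<close>
proof (induction j)
  case 0
  then show ?case by (simp add: fun_eq_iff)
next
  case (Suc j)
  have IH: "design m p k tb s \<omega> j = ((\<lambda>u. if s \<le> u \<and> u < s + j then k else 0), (\<lambda>_. 0), s + j)"
    by (rule Suc.IH) (use Suc.prems in auto)
  define N' where "N' = (\<lambda>u. if s \<le> u \<and> u < s + Suc j then k else (0::nat))"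
  have N': "(\<lambda>u. if s \<le> u \<and> u < s + j then k else 0)(s + j := 0 + k) = N'"
    unfolding N'_def by (auto simp: fun_eq_iff)
  have "{i. i < k \<and> \<omega> (s + j, 0 + i)} = {}"
    using Suc.prems(1) by auto
  then have T': "(\<lambda>_. 0::nat)(s + j := 0 + card {i. i < k \<and> \<omega> (s + j, 0 + i)}) = (\<lambda>_. 0)"
    by (auto simp: fun_eq_iff)
  have observed: "observed m N' = {s..s + j}"
    using Suc.prems(2) s k unfolding observed_def N'_def by auto
  have "Max (observed m N') = s + j"
    unfolding observed by (rule Max_eqI) auto
  moreover have "est N' (\<lambda>_. 0) (s + j) = 0"
    by (simp add: est_def)
  ultimately have "next_level m p tb N' (\<lambda>_. 0) = s + Suc j"
    using Suc.prems(2) p unfolding next_level_def Let_def by simp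
  with IH N' T' show ?case
    by (simp add: cohort_step_def Let_def N'_def)
qed

lemma nonconvergence_after_toxic_cohort:
  assumes s: "1 \<le> s" "s < u" "u \<le> m" and p: "0 < p" "p < 1/2" and k: "1 \<le> k"
    and outcomes: "\<And>v i. s \<le> v \<Longrightarrow> v \<le> u \<Longrightarrow> i < k \<Longrightarrow> \<omega> (v, i) \<longleftrightarrow> v = u"
  shows "\<not> converges_to (alloc m p k tb s \<omega>) u"
proof -
  define N where "N = (\<lambda>v. if s \<le> v \<and> v < u then k else 0)(u := k)"
  define T where "T = (\<lambda>_. 0::nat)(u := k)"
  have escalated: "design m p k tb s \<omega> (u - s) = ((\<lambda>v. if s \<le> v \<and> v < u then k else 0), \<lambda>_. 0, u)"
    using design_escalates_without_toxicity[of s p k "u - s" \<omega> m] s p k outcomes by auto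
  have "{i. i < k \<and> \<omega> (u, 0 + i)} = {..<k}"
    using outcomes s by auto
  with escalated have step: "design m p k tb s \<omega> (Suc (u - s)) = (N, T, next_level m p tb N T)"
    by (simp add: cohort_step_def Let_def N_def T_def)
  have "u \<in> observed m N" "T u = N u" "s \<in> observed m N" "T s < N s"
    using s k unfolding observed_def N_def T_def by auto
  then have "locked_out m u s (design m p k tb s \<omega> (Suc (u - s)))"
    unfolding step locked_out_def using next_level_avoids_saturated[OF _ _ _ _ p] by auto
  then have "\<forall>n\<ge>Suc (u - s). alloc m p k tb s \<omega> n \<noteq> u"
    using locked_out_forever[OF p] by blast
  then show ?thesis
    unfolding converges_to_def by (metis le_cases)
qed

end

text \<open>The event is the union of the cylinders fixed by the restrictions of its points to \<open>J\<close>,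
  and there are finitely many such restrictions.\<close>

lemma sets_PiM_finite_dependence:
  fixes M :: "'i \<Rightarrow> 'a::finite measure"
  assumes sets_M: "\<And>i. sets (M i) = UNIV" and J: "finite J"
    and dep: "\<And>\<omega> \<omega>'. (\<forall>j\<in>J. \<omega> j = \<omega>' j) \<Longrightarrow> P \<omega> \<longleftrightarrow> P \<omega>'"
  shows "{\<omega> \<in> space (PiM UNIV M). P \<omega>} \<in> sets (PiM UNIV M)"
proof -
  let ?S = "space (PiM UNIV M)"
  define C where "C g = {\<omega> \<in> ?S. \<forall>j\<in>J. \<omega> j = g j}" for g :: "'i \<Rightarrow> 'a"
  have C: "C g \<in> sets (PiM UNIV M)" for g
    unfolding C_def
    by (rule sets.sets_Collect_finite_All[OF _ J], rule sets_Collect_single') (auto simp: sets_M)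
  define R where "R = (\<lambda>\<omega>. restrict \<omega> J) ` {\<omega> \<in> ?S. P \<omega>}"
  have "R \<subseteq> PiE J (\<lambda>_. UNIV)"
    unfolding R_def by auto
  then have "finite R"
    by (rule finite_subset) (simp add: J finite_PiE)
  moreover have "{\<omega> \<in> ?S. P \<omega>} = (\<Union>g\<in>R. C g)"
  proof (intro equalityI subsetI)
    fix \<omega> assume "\<omega> \<in> {\<omega> \<in> ?S. P \<omega>}"
    then show "\<omega> \<in> (\<Union>g\<in>R. C g)"
      unfolding R_def C_def by (intro UN_I[of "restrict \<omega> J"]) auto
  next
    fix \<omega> assume "\<omega> \<in> (\<Union>g\<in>R. C g)"
    then obtain \<omega>0 where "\<omega>0 \<in> ?S" "P \<omega>0" "\<omega> \<in> C (restrict \<omega>0 J)"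
      unfolding R_def by auto
    with dep[of \<omega> \<omega>0] show "\<omega> \<in> {\<omega> \<in> ?S. P \<omega>}"
      unfolding C_def by auto
  qed
  ultimately show ?thesis
    using C by auto
qed

lemma (in tie_breaking) sets_nonconvergence:
  assumes s: "s \<in> {1..m}" and k: "1 \<le> k"
  shows "{\<omega> \<in> space (tox_space F d). \<not> converges_to (alloc m p k tb s \<omega>) u} \<in> sets (tox_space F d)"
proof -
  let ?M = "tox_space F d"
  have alloc: "{\<omega> \<in> space ?M. alloc m p k tb s \<omega> n = u} \<in> sets ?M" for n
    unfolding tox_space_def
  proof (rule sets_PiM_finite_dependence)
    fix \<omega> \<omega>' :: "nat \<times> nat \<Rightarrow> bool"
    assume "\<forall>j\<in>{..m} \<times> {..<n*k}. \<omega> j = \<omega>' j"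
    then have "design m p k tb s \<omega> n = design m p k tb s \<omega>' n"
      by (intro design_depends_on_initial_outcomes[OF s k]) auto
    then show "alloc m p k tb s \<omega> n = u \<longleftrightarrow> alloc m p k tb s \<omega>' n = u"
      unfolding alloc_def by simp
  qed auto
  have eventually_alloc: "{\<omega> \<in> space ?M. n0 \<le> n \<longrightarrow> alloc m p k tb s \<omega> n = u} \<in> sets ?M" for n0 n
    using alloc[of n] by (cases "n0 \<le> n") auto
  have from_n0: "{\<omega> \<in> space ?M. \<forall>n. n0 \<le> n \<longrightarrow> alloc m p k tb s \<omega> n = u} \<in> sets ?M" for n0
    by (rule sets.sets_Collect_countable_All) (rule eventually_alloc)
  have "{\<omega> \<in> space ?M. \<exists>n0. \<forall>n. n0 \<le> n \<longrightarrow> alloc m p k tb s \<omega> n = u} \<in> sets ?M"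
    by (rule sets.sets_Collect_countable_Ex) (rule from_n0)
  then have "space ?M - {\<omega> \<in> space ?M. converges_to (alloc m p k tb s \<omega>) u} \<in> sets ?M"
    unfolding converges_to_def by (rule sets.Diff[OF sets.top])
  moreover have "{\<omega> \<in> space ?M. \<not> converges_to (alloc m p k tb s \<omega>) u}
      = space ?M - {\<omega> \<in> space ?M. converges_to (alloc m p k tb s \<omega>) u}"
    by blast
  ultimately show ?thesis
    by simp
qed

lemma prob_space_tox_space: "prob_space (tox_space F d)"
  unfolding tox_space_def by (intro prob_space_PiM prob_space_measure_pmf)

lemma measure_tox_space_cylinder_pos:
  assumes J: "finite J"
    and possible: "\<And>j. j \<in> J \<Longrightarrow> 0 < pmf (bernoulli_pmf (F (d (fst j)))) (b j)"
  shows "0 < measure (tox_space F d) {\<omega> \<in> space (tox_space F d). \<forall>j\<in>J. \<omega> j \<in> {b j}}"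
proof -
  let ?Mj = "\<lambda>j::nat \<times> nat. measure_pmf (bernoulli_pmf (F (d (fst j))))"
  let ?E = "{\<omega> \<in> space (tox_space F d). \<forall>j\<in>J. \<omega> j \<in> {b j}}"
  interpret product_prob_space ?Mj UNIV
    by unfold_locales (simp add: prob_space_measure_pmf)
  have "emeasure (tox_space F d) ?E = (\<Prod>j\<in>J. emeasure (?Mj j) {b j})"
    unfolding tox_space_def by (rule emeasure_PiM_Collect) (auto simp: J)
  also have "\<dots> \<noteq> 0"
  proof -
    have "emeasure (?Mj j) {b j} \<noteq> 0" if "j \<in> J" for j
      using possible[OF that] by (simp add: emeasure_pmf_single)
    then show ?thesis
      using J by (simp add: prod_zero_iff)
  qed
  finally have "ennreal (measure (tox_space F d) ?E) \<noteq> 0"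
    unfolding finite_measure.emeasure_eq_measure[OF prob_space.finite_measure[OF prob_space_tox_space]] .
  then show ?thesis
    by (simp add: ennreal_eq_0_iff)
qed

theorem mainTheorem4:
  fixes F :: "real \<Rightarrow> real" and d :: "nat \<Rightarrow> real" and m k s ustar :: nat and p :: real
    and tb :: "(nat \<Rightarrow> nat) \<Rightarrow> (nat \<Rightarrow> nat) \<Rightarrow> nat set \<Rightarrow> nat"
  assumes F_mono: "strict_mono F"
    and F_range: "\<And>x. 0 \<le> F x \<and> F x \<le> 1"
    and d_mono: "strict_mono_on {1..m} d"
    and p_pos: "0 < p" and p_half: "p < 1/2"
    and ustar_ge: "2 \<le> ustar" and ustar_le: "ustar \<le> m"
    and mtd: "F (d ustar) = p"
    and below: "F (d (ustar - 1)) < p"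
    and k_pos: "1 \<le> k"
    and start: "1 \<le> s" "s < ustar"
    and tb: "\<And>N T A. finite A \<Longrightarrow> A \<noteq> {} \<Longrightarrow> tb N T A \<in> A"
  shows "measure (tox_space F d)
           {\<omega> \<in> space (tox_space F d). \<not> converges_to (alloc m p k tb s \<omega>) ustar} > 0"
proof -
  interpret tie_breaking tb
    using tb by unfold_locales
  interpret prob_space "tox_space F d"
    by (rule prob_space_tox_space)
  define J where "J = {s..ustar} \<times> {..<k}"
  define E where "E = {\<omega> \<in> space (tox_space F d). \<forall>j\<in>J. \<omega> j \<in> {fst j = ustar}}"
  have below_mtd: "F (d v) < p" if "s \<le> v" "v < ustar" for v
    using strict_mono_onD[OF d_mono, of v ustar] strict_monoD[OF F_mono] mtd that start ustar_le
    by auto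
  have "0 < pmf (bernoulli_pmf (F (d v))) (v = ustar)" if "s \<le> v" "v \<le> ustar" for v
  proof (cases "v = ustar")
    case True
    then show ?thesis using mtd p_pos F_range[of "d ustar"] by simp
  next
    case False
    then have "F (d v) < p" using below_mtd that by simp
    then show ?thesis using False F_range[of "d v"] p_half by simp
  qed
  then have "0 < prob E"
    unfolding E_def J_def by (intro measure_tox_space_cylinder_pos) auto
  also have "prob E \<le> prob {\<omega> \<in> space (tox_space F d). \<not> converges_to (alloc m p k tb s \<omega>) ustar}"
  proof (rule finite_measure_mono)
    show "E \<subseteq> {\<omega> \<in> space (tox_space F d). \<not> converges_to (alloc m p k tb s \<omega>) ustar}"
      unfolding E_def J_def
      using nonconvergence_after_toxic_cohort[OF start ustar_le p_pos p_half k_pos] by auto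
    show "{\<omega> \<in> space (tox_space F d). \<not> converges_to (alloc m p k tb s \<omega>) ustar} \<in> events"
      using sets_nonconvergence start ustar_le k_pos by simp
  qed
  finally show ?thesis .
qed

end
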